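(* Let $b\ge2$, $n\ge1$ be integers, $\mathcal D=\{d,\dots,d+b-1\}$ a set of consecutive integers containing $0$, $s$ the minimal element and $m$ the size of $\Omega_n(b,\mathcal D)$, and $l=d/(b-1)$. Let $p=1/\{(n-1)(-l)\}$ if $(n-1)l\notin\mathbb Z$ and $p=1$ if $(n-1)l\in\mathbb Z$, where $\{x\}=x-\lfloor x\rfloor$. Then $(b-1)/p$ is a positive integer and for $0\le i,j\le m-1$, $$\tilde p_{i,j}=\frac{1}{b^n}\sum_{r=0}^{j}(-1)^r\binom{n+1}{r}\binom{n+b(j-r)+\frac{b-1}{p}-i}{n},$$ where $\binom{N}{n}=0$ for integers $0\le N<n$.
   Context: Carries process over $(b,\mathcal D)$: let $\{X_{k,i}\}_{1\le k\le n,\ i\ge 0}$ be independent random variables, each uniformly distributed on $\mathcal D$. Set $C_0=0$; for $i\ge 0$ let $A_i$ be the unique element of $\mathcal D$ with $A_i\equiv C_i+X_{1,i}+\dots+X_{n,i}\pmod b$, and set $C_{i+1}=(C_i+X_{1,i}+\dots+X_{n,i}-A_i)/b$. The state space $\Omega_n(b,\mathcal D)$ is the set of integers $c$ with $\Pr(C_i=c)>0$ for some $i\ge0$; it is a set of consecutive integers. $\tilde p_{i,j}=\Pr(C_{t+1}=j+s\mid C_t=i+s)$. *)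

theory Defs
  imports "HOL-Probability.Probability"
begin

definition digit_set :: "nat \<Rightarrow> int \<Rightarrow> int set" where
  "digit_set b d = {d .. d + int b - 1}"

definition digit_of :: "nat \<Rightarrow> int \<Rightarrow> int \<Rightarrow> int" where
  "digit_of b d v = (THE a. a \<in> digit_set b d \<and> a mod int b = v mod int b)"

text \<open>One carry step: from carry c and digits x_1..x_n (indexed 0..n-1) to the next carry.\<close>
definition carry_step :: "nat \<Rightarrow> int \<Rightarrow> nat \<Rightarrow> int \<Rightarrow> (nat \<Rightarrow> int) \<Rightarrow> int" where
  "carry_step b d n c x =
     (let v = c + (\<Sum>k<n. x k) in (v - digit_of b d v) div int b)"

definition digits_pmf :: "nat \<Rightarrow> int \<Rightarrow> nat \<Rightarrow> (nat \<Rightarrow> int) pmf" where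
  "digits_pmf b d n = pmf_of_set ({0..<n} \<rightarrow>\<^sub>E digit_set b d)"

definition carry_trans :: "nat \<Rightarrow> int \<Rightarrow> nat \<Rightarrow> int \<Rightarrow> int pmf" where
  "carry_trans b d n c = map_pmf (carry_step b d n c) (digits_pmf b d n)"

fun carry_dist :: "nat \<Rightarrow> int \<Rightarrow> nat \<Rightarrow> nat \<Rightarrow> int pmf" where
  "carry_dist b d n 0 = return_pmf 0"
| "carry_dist b d n (Suc i) = bind_pmf (carry_dist b d n i) (carry_trans b d n)"

definition carry_states :: "nat \<Rightarrow> int \<Rightarrow> nat \<Rightarrow> int set" where
  "carry_states b d n = {c. \<exists>i. pmf (carry_dist b d n i) c > 0}"

definition fracpart :: "real \<Rightarrow> real" where
  "fracpart x = x - of_int \<lfloor>x\<rfloor>"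

end

theory Submission
  imports Defs
begin

(*
  The carry step is c |-> (c + x_1 + ... + x_n - d) div b, so the transition c -> c' occurs
  exactly when the digit sum lies in a window of b consecutive integers.  Adjoining one more
  digit, the number of such digit tuples becomes the number of ways to write a single integer
  as an ordered sum of n + 1 parts from {0..b-1}, and inclusion-exclusion over the parts that
  overflow gives the alternating binomial sum.

  Put kappa = (b-1) - ((n-1)d mod (b-1)) and s0 = floor((n-1)d / (b-1)).  Every step maps
  [s0, s0 + n + kappa] into itself, and choosing all digits equal to d strictly decreases a
  carry above s0 while never going below it.  Hence the state space starts at s0, has at most
  n + kappa + 1 elements, and kappa is the quantity (b-1)/p.
*)

lemma int_le_div_iff:
  fixes b q y :: int
  assumes "0 < b"
  shows "q \<le> y div b \<longleftrightarrow> b * q \<le> y"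
proof
  assume "q \<le> y div b"
  then have "b * q \<le> b * (y div b)"
    using assms by simp
  also have "\<dots> \<le> y"
    using assms mult_div_mod_eq[of b y] pos_mod_sign[of b y] by linarith
  finally show "b * q \<le> y" .
next
  assume "b * q \<le> y"
  then have "(b * q) div b \<le> y div b"
    using assms by (rule zdiv_mono1)
  then show "q \<le> y div b"
    using assms by simp
qed

lemma int_div_less_iff:
  fixes b q y :: int
  assumes "0 < b"
  shows "y div b < q \<longleftrightarrow> y < b * q"
  using int_le_div_iff[OF assms] by (simp add: not_le[symmetric])

lemma int_div_eq_iff:
  fixes b q y :: int
  assumes "0 < b"
  shows "y div b = q \<longleftrightarrow> y \<in> {b * q..<b * q + b}"
  using int_le_div_iff[OF assms, of q y] int_div_less_iff[OF assms, of y "q + 1"]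
  by (auto simp: algebra_simps)

lemma fracpart_of_int_divide:
  fixes a q :: int
  assumes "0 < q"
  shows "fracpart (of_int a / of_int q) = of_int (a mod q) / of_int q"
proof -
  have "fracpart (of_int a / of_int q) = of_int a / of_int q - of_int (a div q)"
    by (simp add: fracpart_def floor_divide_of_int_eq)
  also have "\<dots> = (of_int a - of_int q * of_int (a div q)) / of_int q"
    using assms by (simp add: field_simps)
  also have "of_int a - of_int q * of_int (a div q) = (of_int (a mod q) :: real)"
    by (metis minus_mult_div_eq_mod of_int_diff of_int_mult)
  finally show ?thesis .
qed

section \<open>Counting digit tuples by their sum\<close>

lemma digit_set_iff: "x \<in> digit_set b d \<longleftrightarrow> d \<le> x \<and> x \<le> d + int b - 1"
  by (simp add: digit_set_def)

lemma finite_digit_set [simp]: "finite (digit_set b d)"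
  by (simp add: digit_set_def)

lemma card_digit_set [simp]: "card (digit_set b d) = b"
  by (simp add: digit_set_def)

lemma digit_set_eq_image: "digit_set b d = (\<lambda>a. d + int a) ` {..<b}"
proof (intro set_eqI iffI)
  fix x assume "x \<in> digit_set b d"
  then show "x \<in> (\<lambda>a. d + int a) ` {..<b}"
    by (intro image_eqI[of _ _ "nat (x - d)"]) (auto simp: digit_set_iff)
qed (auto simp: digit_set_iff)

definition tuple_sum_count :: "'a set \<Rightarrow> nat \<Rightarrow> 'a::comm_monoid_add \<Rightarrow> nat" where
  "tuple_sum_count D k T = card {x \<in> {0..<k} \<rightarrow>\<^sub>E D. (\<Sum>i<k. x i) = T}"

lemma tuple_sum_count_0: "tuple_sum_count D 0 T = (if T = 0 then 1 else 0)"
  by (simp add: tuple_sum_count_def)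

lemma tuple_sum_count_Suc:
  fixes D :: "'a::ab_group_add set"
  assumes "finite D"
  shows "tuple_sum_count D (Suc k) T = (\<Sum>y\<in>D. tuple_sum_count D k (T - y))"
proof -
  let ?P = "{0..<k} \<rightarrow>\<^sub>E D"
  let ?ext = "\<lambda>(y, g). g(k := y)"
  let ?A = "SIGMA y:D. {g \<in> ?P. (\<Sum>i<k. g i) = T - y}"
  have "{x \<in> {0..<Suc k} \<rightarrow>\<^sub>E D. (\<Sum>i<Suc k. x i) = T}
      = {x \<in> ?ext ` (D \<times> ?P). (\<Sum>i<Suc k. x i) = T}"
    by (simp add: atLeast0_lessThan_Suc PiE_insert_eq)
  also have "\<dots> = ?ext ` {z \<in> D \<times> ?P. (\<Sum>i<Suc k. ?ext z i) = T}"
    by blast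
  also have "{z \<in> D \<times> ?P. (\<Sum>i<Suc k. ?ext z i) = T} = ?A"
    by (auto simp: eq_diff_eq add.commute)
  finally have "tuple_sum_count D (Suc k) T = card (?ext ` ?A)"
    unfolding tuple_sum_count_def by (rule arg_cong)
  also have "\<dots> = card ?A"
  proof (rule card_image, rule inj_on_subset[OF inj_combinator])
    show "?A \<subseteq> D \<times> ?P" by blast
  qed simp
  also have "\<dots> = (\<Sum>y\<in>D. tuple_sum_count D k (T - y))"
    using assms by (simp add: card_SigmaI finite_PiE tuple_sum_count_def)
  finally show ?thesis .
qed

fun bounded_compositions :: "nat \<Rightarrow> nat \<Rightarrow> int \<Rightarrow> int" where
  "bounded_compositions b 0 T = (if T = 0 then 1 else 0)"
| "bounded_compositions b (Suc k) T = (\<Sum>a<b. bounded_compositions b k (T - int a))"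

lemma tuple_sum_count_digit_set:
  "int (tuple_sum_count (digit_set b d) k T) = bounded_compositions b k (T - int k * d)"
proof (induction k arbitrary: T)
  case 0
  then show ?case by (simp add: tuple_sum_count_0)
next
  case (Suc k)
  have "int (tuple_sum_count (digit_set b d) (Suc k) T)
      = (\<Sum>y\<in>digit_set b d. bounded_compositions b k (T - y - int k * d))"
    by (simp add: tuple_sum_count_Suc Suc)
  also have "\<dots> = (\<Sum>a<b. bounded_compositions b k (T - (d + int a) - int k * d))"
    unfolding digit_set_eq_image by (subst sum.reindex) (auto simp: inj_on_def)
  finally show ?case
    by (simp add: algebra_simps)
qed

text \<open>The number of weak compositions of \<open>t\<close> into \<open>k + 1\<close> parts.\<close>
definition weak_compositions :: "nat \<Rightarrow> int \<Rightarrow> int" where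
  "weak_compositions k t = (if 0 \<le> t then int ((nat t + k) choose k) else 0)"

lemma weak_compositions_diff:
  "weak_compositions (Suc k) t - weak_compositions (Suc k) (t - 1) = weak_compositions k t"
proof (cases "t \<ge> 1")
  case True
  then have "nat t = Suc (nat (t - 1))" by arith
  with True show ?thesis by (simp add: weak_compositions_def)
next
  case False
  then show ?thesis by (cases "t = 0") (auto simp: weak_compositions_def)
qed

lemma sum_weak_compositions:
  "(\<Sum>a<b. weak_compositions k (t - int a))
     = weak_compositions (Suc k) t - weak_compositions (Suc k) (t - int b)"
proof (induction b)
  case (Suc b)
  then show ?case
    using weak_compositions_diff[of k "t - int b"] by (simp add: algebra_simps)
qed simp

lemma weak_compositions_gchoose:
  assumes "0 \<le> t + int k"
  shows "real_of_int (weak_compositions k t) = real_of_int (t + int k) gchoose k"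
proof -
  define N where "N = nat (t + int k)"
  have "real_of_int (weak_compositions k t) = real (N choose k)"
    using assms by (auto simp: weak_compositions_def N_def nat_add_distrib)
  also have "\<dots> = real N gchoose k"
    by (rule binomial_gbinomial)
  also have "real N = real_of_int (t + int k)"
    using assms by (simp add: N_def)
  finally show ?thesis .
qed

lemma alternating_binomial_sum_diff:
  fixes g :: "nat \<Rightarrow> int"
  shows "(\<Sum>r\<le>m. (-1)^r * int (m choose r) * (g r - g (Suc r)))
       = (\<Sum>r\<le>Suc m. (-1)^r * int (Suc m choose r) * g r)"
proof -
  have shift: "(\<Sum>r\<le>Suc m. (-1)^r * int (m choose r) * g r)
      = g 0 + (\<Sum>r\<le>m. (-1)^(Suc r) * int (m choose Suc r) * g (Suc r))"
    by (subst sum.atMost_Suc_shift) simp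
  have "(\<Sum>r\<le>Suc m. (-1)^r * int (Suc m choose r) * g r)
      = g 0 + (\<Sum>r\<le>m. (-1)^(Suc r) * int (Suc m choose Suc r) * g (Suc r))"
    by (subst sum.atMost_Suc_shift) simp
  also have "\<dots> = g 0 + (\<Sum>r\<le>m. (-1)^(Suc r) * int (m choose Suc r) * g (Suc r))
                     - (\<Sum>r\<le>m. (-1)^r * int (m choose r) * g (Suc r))"
  proof -
    have "(\<Sum>r\<le>m. (-1)^(Suc r) * int (Suc m choose Suc r) * g (Suc r))
        = (\<Sum>r\<le>m. (-1)^(Suc r) * int (m choose Suc r) * g (Suc r)
                      - (-1)^r * int (m choose r) * g (Suc r))"
      by (rule sum.cong) (simp_all add: algebra_simps)
    then show ?thesis
      by (simp add: sum_subtractf)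
  qed
  also have "\<dots> = (\<Sum>r\<le>m. (-1)^r * int (m choose r) * g r)
                     - (\<Sum>r\<le>m. (-1)^r * int (m choose r) * g (Suc r))"
    using shift by (simp add: binomial_eq_0)
  finally show ?thesis
    by (simp add: sum_subtractf algebra_simps)
qed

lemma bounded_compositions_closed_form:
  "bounded_compositions b (Suc k) T
     = (\<Sum>r\<le>Suc k. (-1)^r * int (Suc k choose r) * weak_compositions k (T - int b * int r))"
proof (induction k arbitrary: T)
  case 0
  have "(\<Sum>a<b. if T - int a = 0 then 1 else 0) = weak_compositions 0 T - weak_compositions 0 (T - int b)"
    by (induction b) (auto simp: weak_compositions_def)
  then show ?case by (simp add: weak_compositions_def)
next
  case (Suc k)
  have "bounded_compositions b (Suc (Suc k)) T
      = (\<Sum>a<b. \<Sum>r\<le>Suc k. (-1)^r * int (Suc k choose r) *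
           weak_compositions k (T - int a - int b * int r))"
    by (subst bounded_compositions.simps(2)) (simp only: Suc.IH)
  also have "\<dots> = (\<Sum>r\<le>Suc k. (-1)^r * int (Suc k choose r) *
           (\<Sum>a<b. weak_compositions k (T - int b * int r - int a)))"
    by (subst sum.swap) (simp add: sum_distrib_left algebra_simps)
  also have "\<dots> = (\<Sum>r\<le>Suc k. (-1)^r * int (Suc k choose r) *
       (weak_compositions (Suc k) (T - int b * int r)
        - weak_compositions (Suc k) (T - int b * int (Suc r))))"
    by (intro sum.cong refl, subst sum_weak_compositions) (simp add: algebra_simps)
  also have "\<dots> = (\<Sum>r\<le>Suc (Suc k). (-1)^r * int (Suc (Suc k) choose r) *
       weak_compositions (Suc k) (T - int b * int r))"
    by (rule alternating_binomial_sum_diff)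
  finally show ?case .
qed

lemma bounded_compositions_gchoose_sum:
  fixes b n i j :: nat and K :: int
  assumes "K < int b" and "int i \<le> int n + K"
  shows "real_of_int (bounded_compositions b (Suc n) (int b * int j + K - int i)) =
    (\<Sum>r = 0..j. (-1) ^ r * real ((n + 1) choose r) *
       ((real n + real b * (real j - real r) + real_of_int K - real i) gchoose n))"
proof -
  define T where "T = int b * int j + K - int i"
  define F where "F r = (-1) ^ r * real ((n + 1) choose r) *
    real_of_int (weak_compositions n (T - int b * int r))" for r
  have "real_of_int (bounded_compositions b (Suc n) T) = (\<Sum>r\<le>Suc n. F r)"
    unfolding bounded_compositions_closed_form F_def by simp
  also have "\<dots> = (\<Sum>r\<le>Suc n + j. F r)"
    by (rule sum.mono_neutral_left) (auto simp: F_def)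
  also have "\<dots> = (\<Sum>r = 0..j. F r)"
  proof (rule sum.mono_neutral_right)
    show "\<forall>r\<in>{..Suc n + j} - {0..j}. F r = 0"
    proof
      fix r assume "r \<in> {..Suc n + j} - {0..j}"
      then have "int b * int (Suc j) \<le> int b * int r"
        by (intro mult_left_mono) auto
      then have "T - int b * int r < 0"
        using assms(1) by (simp add: T_def algebra_simps)
      then show "F r = 0"
        by (simp add: F_def weak_compositions_def)
    qed
  qed auto
  also have "\<dots> = (\<Sum>r = 0..j. (-1) ^ r * real ((n + 1) choose r) *
       ((real n + real b * (real j - real r) + real_of_int K - real i) gchoose n))"
  proof (rule sum.cong[OF refl])
    fix r assume "r \<in> {0..j}"
    then have "int b * int r \<le> int b * int j"
      by (intro mult_left_mono) auto
    then have "0 \<le> T - int b * int r + int n"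
      using assms(2) by (simp add: T_def)
    moreover have "real n + real b * (real j - real r) + real_of_int K - real i
        = real_of_int (T - int b * int r + int n)"
      by (simp add: T_def algebra_simps)
    ultimately show "F r = (-1) ^ r * real ((n + 1) choose r) *
       ((real n + real b * (real j - real r) + real_of_int K - real i) gchoose n)"
      by (simp only: F_def weak_compositions_gchoose)
  qed
  finally show ?thesis
    by (simp add: T_def)
qed

abbreviation digit_tuples :: "nat \<Rightarrow> int \<Rightarrow> nat \<Rightarrow> (nat \<Rightarrow> int) set" where
  "digit_tuples b d k \<equiv> {0..<k} \<rightarrow>\<^sub>E digit_set b d"

lemma finite_digit_tuples: "finite (digit_tuples b d k)"
  by (simp add: finite_PiE)

lemma card_digit_tuples: "card (digit_tuples b d k) = b ^ k"
  by (simp add: card_PiE)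

lemma digit_tuples_nonempty: "0 < b \<Longrightarrow> digit_tuples b d k \<noteq> {}"
  by (auto simp: PiE_eq_empty_iff digit_set_def)

lemma sum_digit_tuple_bounds:
  assumes "x \<in> digit_tuples b d k"
  shows "int k * d \<le> (\<Sum>i<k. x i)" and "(\<Sum>i<k. x i) \<le> int k * (d + int b - 1)"
  using assms sum_bounded_below[of "{..<k}" d x] sum_bounded_above[of "{..<k}" x "d + int b - 1"]
  by (auto simp: PiE_iff digit_set_iff)

lemma card_digit_tuples_sum_window:
  "int (card {x \<in> digit_tuples b d k. (\<Sum>i<k. x i) \<in> {L..<L + int b}})
     = bounded_compositions b (Suc k) (L + int b - 1 - int k * d)"
proof -
  let ?S = "\<lambda>a::nat. {x \<in> digit_tuples b d k. (\<Sum>i<k. x i) = L + int b - 1 - int a}"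
  have window: "s \<in> {L..<L + int b} \<longleftrightarrow> (\<exists>a<b. s = L + int b - 1 - int a)" for s
  proof
    assume "s \<in> {L..<L + int b}"
    then show "\<exists>a<b. s = L + int b - 1 - int a"
      by (intro exI[of _ "nat (L + int b - 1 - s)"]) auto
  qed auto
  have "{x \<in> digit_tuples b d k. (\<Sum>i<k. x i) \<in> {L..<L + int b}} = (\<Union>a<b. ?S a)"
    unfolding window by blast
  moreover have "card (\<Union>a<b. ?S a) = (\<Sum>a<b. card (?S a))"
    by (rule card_UN_disjoint) (auto simp: finite_digit_tuples)
  ultimately have "int (card {x \<in> digit_tuples b d k. (\<Sum>i<k. x i) \<in> {L..<L + int b}})
      = (\<Sum>a<b. int (card (?S a)))"
    by simp
  also have "\<dots> = (\<Sum>a<b. bounded_compositions b k (L + int b - 1 - int a - int k * d))"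
    by (simp only: tuple_sum_count_digit_set[unfolded tuple_sum_count_def])
  finally show ?thesis
    by (simp add: algebra_simps)
qed

section \<open>The carry transition\<close>

lemma digit_of_eq:
  assumes "0 < b"
  shows "digit_of b d v = d + (v - d) mod int b"
  unfolding digit_of_def
proof (rule the_equality)
  have "(d + (v - d) mod int b) mod int b = v mod int b"
    by (simp add: mod_add_right_eq)
  then show "d + (v - d) mod int b \<in> digit_set b d \<and> (d + (v - d) mod int b) mod int b = v mod int b"
    using assms by (simp add: digit_set_iff)
next
  fix a assume a: "a \<in> digit_set b d \<and> a mod int b = v mod int b"
  then have "(a - d) mod int b = (v - d) mod int b"
    by (metis mod_diff_cong)
  moreover have "(a - d) mod int b = a - d"
    using a by (intro mod_pos_pos_trivial) (auto simp: digit_set_iff)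
  ultimately show "a = d + (v - d) mod int b"
    by simp
qed

lemma carry_step_eq:
  assumes "0 < b"
  shows "carry_step b d n c x = (c + (\<Sum>k<n. x k) - d) div int b"
proof -
  define v where "v = c + (\<Sum>k<n. x k)"
  have "v - digit_of b d v = int b * ((v - d) div int b)"
    using digit_of_eq[OF assms, of d v] mult_div_mod_eq[of "int b" "v - d"] by linarith
  then show ?thesis
    using assms by (simp add: carry_step_def Let_def flip: v_def)
qed

lemma set_pmf_carry_trans:
  assumes "0 < b"
  shows "set_pmf (carry_trans b d n c) = (\<lambda>x. (c + (\<Sum>k<n. x k) - d) div int b) ` digit_tuples b d n"
  using assms
  by (simp add: carry_trans_def digits_pmf_def carry_step_eq finite_digit_tuples digit_tuples_nonempty)

lemma pmf_carry_trans:
  assumes "0 < b"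
  shows "pmf (carry_trans b d n c) c' = real_of_int
    (bounded_compositions b (Suc n) (int b * c' - c + d + int b - 1 - int n * d)) / real b ^ n"
proof -
  let ?L = "int b * c' - c + d"
  have "carry_step b d n c x = c' \<longleftrightarrow> (\<Sum>i<n. x i) \<in> {?L..<?L + int b}" for x
    using assms by (auto simp: carry_step_eq int_div_eq_iff)
  then have "digit_tuples b d n \<inter> carry_step b d n c -` {c'}
      = {x \<in> digit_tuples b d n. (\<Sum>i<n. x i) \<in> {?L..<?L + int b}}"
    by auto
  then have "pmf (carry_trans b d n c) c'
      = real (card {x \<in> digit_tuples b d n. (\<Sum>i<n. x i) \<in> {?L..<?L + int b}}) / real b ^ n"
    using assms
    by (simp add: carry_trans_def digits_pmf_def pmf_map measure_pmf_of_set finite_digit_tuples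
        digit_tuples_nonempty card_digit_tuples)
  also have "\<dots> = real_of_int (bounded_compositions b (Suc n) (?L + int b - 1 - int n * d)) / real b ^ n"
    unfolding card_digit_tuples_sum_window[symmetric] by simp
  finally show ?thesis .
qed

section \<open>The state space\<close>

lemma mem_carry_states_iff: "c \<in> carry_states b d n \<longleftrightarrow> (\<exists>i. c \<in> set_pmf (carry_dist b d n i))"
  by (simp add: carry_states_def set_pmf_iff order_less_le)

lemma zero_mem_carry_states: "0 \<in> carry_states b d n"
  using mem_carry_states_iff[of 0 b d n] by (metis carry_dist.simps(1) set_return_pmf singletonI)

lemma carry_states_closed:
  assumes "c \<in> carry_states b d n" and "c' \<in> set_pmf (carry_trans b d n c)"
  shows "c' \<in> carry_states b d n"
proof -
  obtain i where "c \<in> set_pmf (carry_dist b d n i)"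
    using assms(1) by (auto simp: mem_carry_states_iff)
  then have "c' \<in> set_pmf (carry_dist b d n (Suc i))"
    using assms(2) by auto
  then show ?thesis
    unfolding mem_carry_states_iff by blast
qed

lemma carry_states_induct [consumes 1]:
  assumes "c \<in> carry_states b d n" and "P 0"
    and "\<And>c c'. P c \<Longrightarrow> c' \<in> set_pmf (carry_trans b d n c) \<Longrightarrow> P c'"
  shows "P c"
proof -
  have "\<forall>c\<in>set_pmf (carry_dist b d n i). P c" for i
    by (induction i) (use assms(2,3) in auto)
  then show ?thesis
    using assms(1) by (auto simp: mem_carry_states_iff)
qed

locale carry_chain =
  fixes b n :: nat and d :: int
  assumes two_le_b: "2 \<le> b" and one_le_n: "1 \<le> n" and zero_digit: "0 \<in> digit_set b d"
begin

definition carry_min :: int where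
  "carry_min = int (n - 1) * d div (int b - 1)"

text \<open>This is \<open>(b - 1)/p\<close> in the paper's notation.\<close>
definition kappa :: int where
  "kappa = int b - 1 - int (n - 1) * d mod (int b - 1)"

lemma b_pos: "0 < int b"
  using two_le_b by simp

lemma b_minus_1_pos: "0 < int b - 1"
  using two_le_b by simp

lemma digit_bounds: "1 - int b \<le> d" "d \<le> 0"
  using zero_digit by (auto simp: digit_set_iff)

lemma kappa_bounds: "1 \<le> kappa" "kappa \<le> int b - 1"
  using pos_mod_sign[OF b_minus_1_pos, of "int (n - 1) * d"]
    pos_mod_bound[OF b_minus_1_pos, of "int (n - 1) * d"]
  unfolding kappa_def by linarith+

lemma carry_min_kappa: "(int b - 1) * carry_min = int (n - 1) * d - (int b - 1) + kappa"
  using mult_div_mod_eq[of "int b - 1" "int (n - 1) * d"]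
  unfolding carry_min_def kappa_def by linarith

lemma carry_min_bounds: "1 - int n \<le> carry_min" "carry_min \<le> 0"
proof -
  have "int (n - 1) * (1 - int b) \<le> int (n - 1) * d"
    using digit_bounds by (intro mult_left_mono) auto
  then show "1 - int n \<le> carry_min"
    using one_le_n by (simp add: carry_min_def int_le_div_iff[OF b_minus_1_pos] algebra_simps of_nat_diff)
  show "carry_min \<le> 0"
    using digit_bounds b_minus_1_pos
    by (simp add: carry_min_def div_nonpos_pos_le0 mult_nonneg_nonpos)
qed

lemma n_times_d: "int n * d = int (n - 1) * d + d"
  using one_le_n by (simp add: of_nat_diff algebra_simps)

lemma carry_step_bounds:
  assumes "c \<in> {carry_min..carry_min + int n + kappa}" and "x \<in> digit_tuples b d n"
  shows "(c + (\<Sum>i<n. x i) - d) div int b \<in> {carry_min..carry_min + int n + kappa}"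
proof -
  have c: "carry_min \<le> c" "c \<le> carry_min + int n + kappa"
    using assms(1) by auto
  note sum_x = sum_digit_tuple_bounds[OF assms(2)]
  have "int b * carry_min = (int b - 1) * carry_min + carry_min"
    by (simp add: algebra_simps)
  then have "int b * carry_min \<le> c + (\<Sum>i<n. x i) - d"
    using c sum_x(1) kappa_bounds carry_min_kappa n_times_d by linarith
  then have lower: "carry_min \<le> (c + (\<Sum>i<n. x i) - d) div int b"
    using two_le_b by (simp add: int_le_div_iff)
  have "int b * (carry_min + int n + kappa + 1)
      = carry_min + int n + kappa + 1 + (int b - 1) * carry_min + (int b - 1) * int n
        + (int b - 1) * kappa + (int b - 1)"
    by (simp add: algebra_simps)
  moreover have "int n * (d + int b - 1) = int n * d + (int b - 1) * int n"
    by (simp add: algebra_simps)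
  moreover have "0 \<le> (int b - 1) * kappa"
    using b_minus_1_pos kappa_bounds by simp
  ultimately have "c + (\<Sum>i<n. x i) - d < int b * (carry_min + int n + kappa + 1)"
    using c sum_x(2) kappa_bounds carry_min_kappa n_times_d by linarith
  then have "(c + (\<Sum>i<n. x i) - d) div int b < carry_min + int n + kappa + 1"
    by (rule iffD2[OF int_div_less_iff[OF b_pos]])
  with lower show ?thesis
    by simp
qed

lemma carry_states_subset: "carry_states b d n \<subseteq> {carry_min..carry_min + int n + kappa}"
proof
  fix c assume "c \<in> carry_states b d n"
  then show "c \<in> {carry_min..carry_min + int n + kappa}"
  proof (induction rule: carry_states_induct)
    case 1
    show ?case
      using carry_min_bounds kappa_bounds by simp
  next
    case (2 c c')
    then show ?case
      using carry_step_bounds two_le_b by (auto simp: set_pmf_carry_trans)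
  qed
qed

text \<open>With every digit equal to \<open>d\<close> the carry strictly decreases until it reaches the fixed
  point \<open>carry_min\<close>.\<close>
lemma carry_descent:
  assumes "c \<in> carry_states b d n" and "carry_min < c"
  obtains c' where "c' \<in> carry_states b d n" and "carry_min \<le> c'" and "c' < c"
proof -
  define x where "x = restrict (\<lambda>_. d) {0..<n}"
  have x: "x \<in> digit_tuples b d n" and sum_x: "(\<Sum>i<n. x i) = int n * d"
    using two_le_b by (auto simp: x_def digit_set_iff lessThan_atLeast0)
  define c' where "c' = (c + (\<Sum>i<n. x i) - d) div int b"
  have "c' \<in> carry_states b d n"
    using carry_states_closed[OF assms(1)] x two_le_b by (auto simp: set_pmf_carry_trans c'_def)
  moreover have "carry_min \<le> c'"
    using carry_step_bounds[OF _ x, of c] carry_states_subset assms(1) by (auto simp: c'_def)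
  moreover have "c' < c"
  proof -
    have "(int b - 1) * (carry_min + 1) \<le> (int b - 1) * c"
      using assms(2) b_minus_1_pos by (intro mult_left_mono) auto
    then have "c + (\<Sum>i<n. x i) - d < int b * c"
      using carry_min_kappa kappa_bounds sum_x n_times_d by (simp add: algebra_simps)
    then show ?thesis
      using two_le_b by (simp add: c'_def int_div_less_iff)
  qed
  ultimately show ?thesis
    using that by blast
qed

lemma carry_min_mem: "carry_min \<in> carry_states b d n"
proof -
  have "carry_min \<in> carry_states b d n" if "c \<in> carry_states b d n" for c
    using that
  proof (induction "nat (c - carry_min)" arbitrary: c rule: less_induct)
    case less
    show ?case
    proof (cases "c = carry_min")
      case False
      then have "carry_min < c"
        using less.prems carry_states_subset by fastforce
      with less.prems obtain c' where "c' \<in> carry_states b d n" "carry_min \<le> c'" "c' < c"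
        by (rule carry_descent)
      then show ?thesis
        using less.hyps by fastforce
    qed (use less.prems in simp)
  qed
  then show ?thesis
    using zero_mem_carry_states by blast
qed

lemma Min_carry_states: "Min (carry_states b d n) = carry_min"
  using carry_states_subset carry_min_mem finite_subset[OF carry_states_subset]
  by (intro Min_eqI) auto

lemma card_carry_states_le: "card (carry_states b d n) \<le> n + nat kappa + 1"
proof -
  have "card (carry_states b d n) \<le> card {carry_min..carry_min + int n + kappa}"
    using carry_states_subset by (intro card_mono) auto
  also have "\<dots> = n + nat kappa + 1"
    using kappa_bounds by simp
  finally show ?thesis .
qed

lemma pmf_carry_trans_from_min:
  assumes "int i \<le> int n + kappa"
  shows "pmf (carry_trans b d n (int i + carry_min)) (int j + carry_min) =
      1 / real b ^ n * (\<Sum>r = 0..j. (-1) ^ r * real ((n + 1) choose r) *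
        ((real n + real b * (real j - real r) + real_of_int kappa - real i) gchoose n))"
proof -
  have "int b * (int j + carry_min) - (int i + carry_min) + d + int b - 1 - int n * d
      = int b * int j + kappa - int i"
    using carry_min_kappa n_times_d by (simp add: algebra_simps)
  then have "pmf (carry_trans b d n (int i + carry_min)) (int j + carry_min)
      = real_of_int (bounded_compositions b (Suc n) (int b * int j + kappa - int i)) / real b ^ n"
    using two_le_b by (simp only: pmf_carry_trans)
  also have "real_of_int (bounded_compositions b (Suc n) (int b * int j + kappa - int i))
      = (\<Sum>r = 0..j. (-1) ^ r * real ((n + 1) choose r) *
          ((real n + real b * (real j - real r) + real_of_int kappa - real i) gchoose n))"
    using assms kappa_bounds by (intro bounded_compositions_gchoose_sum) auto
  finally show ?thesis
    by simp
qed

lemma b_minus_1_div_p_eq_kappa: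
  "(real b - 1) / (if (real n - 1) * (real_of_int d / (real b - 1)) \<in> \<int> then 1
       else 1 / fracpart ((real n - 1) * - (real_of_int d / (real b - 1))))
     = real_of_int kappa"
proof -
  define a where "a = int (n - 1) * d"
  have ratio: "(real n - 1) * (real_of_int d / (real b - 1)) = real_of_int a / real_of_int (int b - 1)"
    using one_le_n by (simp add: a_def of_nat_diff)
  have in_Ints_iff: "(real n - 1) * (real_of_int d / (real b - 1)) \<in> \<int> \<longleftrightarrow> (int b - 1) dvd a"
    unfolding ratio using of_int_div_of_int_in_Ints_iff[of a "int b - 1"] b_minus_1_pos by auto
  show ?thesis
  proof (cases "(int b - 1) dvd a")
    case True
    then have "kappa = int b - 1"
      by (simp add: kappa_def a_def)
    with True show ?thesis
      unfolding in_Ints_iff by simp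
  next
    case False
    have "(real n - 1) * - (real_of_int d / (real b - 1)) = real_of_int (- a) / real_of_int (int b - 1)"
      using ratio by simp
    then have "fracpart ((real n - 1) * - (real_of_int d / (real b - 1)))
        = real_of_int (- a mod (int b - 1)) / real_of_int (int b - 1)"
      by (simp only: fracpart_of_int_divide[OF b_minus_1_pos])
    also have "- a mod (int b - 1) = kappa"
      using False by (simp add: zmod_zminus1_eq_if dvd_eq_mod_eq_0 kappa_def a_def)
    finally show ?thesis
      using False b_minus_1_pos kappa_bounds unfolding in_Ints_iff by simp
  qed
qed

end

theorem lemma2:
  fixes b n :: nat and d :: int
  assumes "b \<ge> 2" and "n \<ge> 1" and "0 \<in> digit_set b d"
  defines "s \<equiv> Min (carry_states b d n)"
      and "m \<equiv> card (carry_states b d n)"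
      and "l \<equiv> real_of_int d / (real b - 1)"
  defines "p \<equiv> (if (real n - 1) * l \<in> \<int> then 1
                else 1 / fracpart ((real n - 1) * (- l)))"
  shows "(\<exists>K::nat. K > 0 \<and> (real b - 1) / p = real K) \<and>
         (\<forall>i j. i \<le> m - 1 \<and> j \<le> m - 1 \<longrightarrow>
            pmf (carry_trans b d n (int i + s)) (int j + s) =
              1 / real b ^ n *
              (\<Sum>r = 0..j. (-1) ^ r * real ((n + 1) choose r) *
                 ((real n + real b * (real j - real r) + (real b - 1) / p - real i)
                    gchoose n)))"
proof -
  interpret carry_chain b n d
    using assms(1-3) by unfold_locales
  have s_eq: "s = carry_min"
    unfolding s_def by (rule Min_carry_states)
  have paper_ratio: "(real b - 1) / p = real_of_int kappa"
    unfolding p_def l_def by (rule b_minus_1_div_p_eq_kappa)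
  have "pmf (carry_trans b d n (int i + s)) (int j + s) =
      1 / real b ^ n * (\<Sum>r = 0..j. (-1) ^ r * real ((n + 1) choose r) *
        ((real n + real b * (real j - real r) + real_of_int kappa - real i) gchoose n))"
    if "i \<le> m - 1" for i j
  proof -
    have "int i \<le> int n + kappa"
      using that card_carry_states_le kappa_bounds unfolding m_def by linarith
    then show ?thesis
      unfolding s_eq by (rule pmf_carry_trans_from_min)
  qed
  moreover have "\<exists>K::nat. K > 0 \<and> (real b - 1) / p = real K"
    using kappa_bounds by (intro exI[of _ "nat kappa"]) (simp add: paper_ratio)
  ultimately show ?thesis
    unfolding paper_ratio by blast
qed

end
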